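(* Let $(X,d)$ be a metric space and $f:\ell_\infty(X)\to X$. The following are equivalent: (i) there is $q\in(0,1)$ with $L_{s,q}(f)<1$; (ii) there are $q\in(0,1)$ and $p\in[1,\infty)$ with $L_{p,q}(f)<(1-q)^{1/p}$; (iii) for every $q\in(0,1)$ there exists $p\in[1,\infty)$ with $L_{p,q}(f)<(1-q)^{1/p}$.
   Context: $\mathbb{N}^*=\{0,1,2,\dots\}$; $\ell_\infty(X)$ is the set of all bounded sequences $(x_n)_{n\in\mathbb{N}^*}$ in $X$. For $q\in(0,1]$, $d_{s,q}(x,y):=\sup\{q^n d(x_n,y_n):n\in\mathbb{N}^*\}$; for $q\in(0,1)$, $p\in[1,\infty)$, $d_{p,q}(x,y):=\left(\sum_{n=0}^\infty q^n d^p(x_n,y_n)\right)^{1/p}$. $L_{s,q}(f)$, $L_{p,q}(f)$ are the Lipschitz constants (possibly $\infty$) of $f$ with respect to $d_{s,q}$, resp. $d_{p,q}$, on $\ell_\infty(X)$ and $d$ on $X$. *)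

theory Defs
  imports "HOL-Analysis.Analysis"
begin

definition linf :: "(nat \<Rightarrow> 'a::metric_space) set" where
  "linf = {x. bounded (range x)}"

definition d_s :: "real \<Rightarrow> (nat \<Rightarrow> 'a::metric_space) \<Rightarrow> (nat \<Rightarrow> 'a) \<Rightarrow> real" where
  "d_s q x y = (SUP n. q ^ n * dist (x n) (y n))"

definition d_p :: "real \<Rightarrow> real \<Rightarrow> (nat \<Rightarrow> 'a::metric_space) \<Rightarrow> (nat \<Rightarrow> 'a) \<Rightarrow> real" where
  "d_p p q x y = (\<Sum>n. q ^ n * dist (x n) (y n) powr p) powr (1 / p)"

text \<open>Lipschitz constant (possibly infinite) of f : (linf, D) -> (X, dist):
  the infimum of all admissible constants, in the extended reals (Inf {} = \<infinity>).\<close>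
definition lip_const ::
  "((nat \<Rightarrow> 'a::metric_space) \<Rightarrow> (nat \<Rightarrow> 'a) \<Rightarrow> real) \<Rightarrow> ((nat \<Rightarrow> 'a) \<Rightarrow> 'a) \<Rightarrow> ereal" where
  "lip_const D f = Inf {ereal L | L. 0 \<le> L \<and>
      (\<forall>x\<in>linf. \<forall>y\<in>linf. dist (f x) (f y) \<le> L * D x y)}"

end

theory Submission
  imports Defs
begin

text \<open>
  The two families of metrics are comparable. If q0^p \<le> q, each term q0^n d(x_n,y_n) of the
  supremum defining d_{s,q0} is bounded by the p-th root of one term of the series defining
  d_{p,q}, so d_{s,q0} \<le> d_{p,q}. Conversely, if q < q'^p then
  q^n d(x_n,y_n)^p \<le> (q/q'^p)^n d_{s,q'}(x,y)^p, and summing the geometric series gives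
  d_{p,q} \<le> (1 - q/q'^p)^(-1/p) d_{s,q'}.

  Hence (i) gives (iii) by choosing p so large that q0 < q^(1/p) and L_{s,q0}(f) < (1-q)^(1/p),
  both right-hand sides tending to 1; and (ii) gives (i) by choosing q' < 1 so close to 1 that
  L_{p,q}(f) (1 - q/q'^p)^(-1/p) is still below (1-q)^(1/p) (1-q)^(-1/p) = 1.
\<close>

definition lipschitz_wrt ::
  "((nat \<Rightarrow> 'a::metric_space) \<Rightarrow> (nat \<Rightarrow> 'a) \<Rightarrow> real) \<Rightarrow> real \<Rightarrow> ((nat \<Rightarrow> 'a) \<Rightarrow> 'a) \<Rightarrow> bool"
  where "lipschitz_wrt D L f \<longleftrightarrow> (\<forall>x\<in>linf. \<forall>y\<in>linf. dist (f x) (f y) \<le> L * D x y)"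

lemma lip_const_less_iff:
  "lip_const D f < ereal r \<longleftrightarrow> (\<exists>L. 0 \<le> L \<and> L < r \<and> lipschitz_wrt D L f)"
  unfolding lip_const_def lipschitz_wrt_def Inf_less_iff by auto

lemma lipschitz_wrt_compare:
  assumes "lipschitz_wrt D L f" "0 \<le> L"
    and "\<And>x y. x \<in> linf \<Longrightarrow> y \<in> linf \<Longrightarrow> D x y \<le> c * D' x y"
  shows "lipschitz_wrt D' (L * c) f"
  unfolding lipschitz_wrt_def
proof (intro ballI)
  fix x y :: "nat \<Rightarrow> 'a" assume xy: "x \<in> linf" "y \<in> linf"
  have "dist (f x) (f y) \<le> L * D x y"
    using assms(1) xy unfolding lipschitz_wrt_def by blast
  also have "\<dots> \<le> L * (c * D' x y)"
    using assms(2,3) xy by (intro mult_left_mono) auto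
  finally show "dist (f x) (f y) \<le> L * c * D' x y"
    by (simp add: mult.assoc)
qed

lemma linf_dist_bounded:
  assumes "x \<in> linf" "y \<in> linf"
  obtains B where "0 \<le> B" "\<And>n. dist (x n) (y n) \<le> B"
proof -
  obtain e1 where e1: "\<forall>z\<in>range x. dist (x 0) z \<le> e1"
    using assms(1) bounded_any_center unfolding linf_def by blast
  obtain e2 where e2: "\<forall>z\<in>range y. dist (x 0) z \<le> e2"
    using assms(2) bounded_any_center unfolding linf_def by blast
  have "dist (x n) (y n) \<le> e1 + e2" for n
  proof -
    have "dist (x 0) (x n) \<le> e1" "dist (x 0) (y n) \<le> e2"
      using e1 e2 by auto
    then show ?thesis
      using dist_triangle[of "x n" "y n" "x 0"] by (simp add: dist_commute)
  qed
  moreover have "0 \<le> e1 + e2"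
    using e1 e2 by (meson add_nonneg_nonneg order_trans rangeI zero_le_dist)
  ultimately show thesis using that by blast
qed

lemma summable_weighted_dist_powr:
  assumes "x \<in> linf" "y \<in> linf" "0 < q" "q < 1" "0 < p"
  shows "summable (\<lambda>n. q ^ n * dist (x n) (y n) powr p)"
proof -
  obtain B where B: "0 \<le> B" "\<And>n. dist (x n) (y n) \<le> B"
    using linf_dist_bounded[OF assms(1,2)] by blast
  show ?thesis
  proof (rule summable_comparison_test'[where g = "\<lambda>n. B powr p * q ^ n"])
    show "summable (\<lambda>n. B powr p * q ^ n)"
      using assms by (intro summable_mult summable_geometric) auto
    fix n
    have "dist (x n) (y n) powr p \<le> B powr p"
      using B assms by (intro powr_mono2) auto
    then show "norm (q ^ n * dist (x n) (y n) powr p) \<le> B powr p * q ^ n"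
      using assms by (simp add: mult.commute mult_left_mono)
  qed
qed

lemma power_powr_swap: "0 < a \<Longrightarrow> (a ^ n) powr p = (a powr p) ^ n" for a :: real
  by (simp add: powr_realpow[symmetric] powr_powr powr_power mult.commute)

lemma d_s_le_d_p:
  assumes "x \<in> linf" "y \<in> linf" "0 < q" "q < 1" "0 < p" "0 < q0" "q0 powr p \<le> q"
  shows "d_s q0 x y \<le> d_p p q x y"
  unfolding d_s_def
proof (rule cSUP_least)
  fix n
  let ?d = "dist (x n) (y n)"
  let ?S = "\<Sum>n. q ^ n * dist (x n) (y n) powr p"
  have "(\<Sum>m\<in>{n}. q ^ m * dist (x m) (y m) powr p) \<le> ?S"
    using assms summable_weighted_dist_powr[OF assms(1-4)] by (intro sum_le_suminf) auto
  moreover have "(q0 ^ n * ?d) powr p = (q0 powr p) ^ n * ?d powr p"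
    using assms by (simp add: powr_mult power_powr_swap)
  moreover have "(q0 powr p) ^ n * ?d powr p \<le> q ^ n * ?d powr p"
    using assms by (intro mult_right_mono power_mono) auto
  ultimately have "(q0 ^ n * ?d) powr p \<le> ?S"
    by simp
  then have "((q0 ^ n * ?d) powr p) powr (1/p) \<le> ?S powr (1/p)"
    using assms by (intro powr_mono2) auto
  then show "q0 ^ n * ?d \<le> d_p p q x y"
    using assms unfolding d_p_def by (simp add: powr_powr)
qed simp

lemma d_p_le_d_s:
  assumes "x \<in> linf" "y \<in> linf" "0 < q" "0 < q'" "q' < 1" "0 < p" "q < q' powr p"
  shows "d_p p q x y \<le> (1 - q / q' powr p) powr (-1/p) * d_s q' x y"
proof -
  define r where "r = q / q' powr p"
  define D where "D = d_s q' x y"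
  have r: "0 < r" "r < 1"
    using assms unfolding r_def by auto
  have "q' powr p \<le> 1"
    using powr_mono2[of p q' 1] assms by simp
  then have q1: "q < 1"
    using assms by simp
  obtain B where B: "0 \<le> B" "\<And>n. dist (x n) (y n) \<le> B"
    using linf_dist_bounded[OF assms(1,2)] by blast
  have "q' ^ n * dist (x n) (y n) \<le> B" for n
    using B(2)[of n] power_le_one[of q' n] assms
    by (meson less_imp_le mult_left_le_one_le order_trans zero_le_dist zero_le_power)
  then have Dn: "q' ^ n * dist (x n) (y n) \<le> D" for n
    unfolding D_def d_s_def by (intro cSUP_upper bdd_aboveI2) auto
  have D0: "0 \<le> D"
    using order_trans[OF zero_le_dist Dn[of 0, simplified]] .
  have term_le: "q ^ n * dist (x n) (y n) powr p \<le> D powr p * r ^ n" for n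
  proof -
    have "dist (x n) (y n) \<le> D / q' ^ n"
      using Dn[of n] assms by (simp add: field_simps)
    then have "dist (x n) (y n) powr p \<le> (D / q' ^ n) powr p"
      using assms by (intro powr_mono2) auto
    also have "\<dots> = D powr p / (q' powr p) ^ n"
      using assms D0 by (simp add: powr_divide power_powr_swap)
    finally have "q ^ n * dist (x n) (y n) powr p \<le> q ^ n * (D powr p / (q' powr p) ^ n)"
      using assms by (intro mult_left_mono) auto
    also have "\<dots> = D powr p * r ^ n"
      unfolding r_def by (simp add: power_divide)
    finally show ?thesis .
  qed
  have "(\<Sum>n. q ^ n * dist (x n) (y n) powr p) \<le> (\<Sum>n. D powr p * r ^ n)"
    using assms q1 r term_le
    by (intro suminf_le summable_weighted_dist_powr summable_mult summable_geometric) auto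
  also have "\<dots> = D powr p / (1 - r)"
    using r by (simp add: suminf_mult suminf_geometric)
  finally have "d_p p q x y \<le> (D powr p / (1 - r)) powr (1/p)"
    unfolding d_p_def using assms q1
    by (intro powr_mono2) (auto intro!: suminf_nonneg summable_weighted_dist_powr)
  also have "\<dots> = (1 - r) powr (-1/p) * D"
    using r D0 assms by (simp add: powr_divide powr_powr powr_minus_divide)
  finally show ?thesis
    unfolding r_def D_def .
qed

lemma tendsto_powr_inverse_at_top: "0 < q \<Longrightarrow> ((\<lambda>p. q powr (1/p)) \<longlongrightarrow> 1) at_top"
  for q :: real
proof -
  assume q: "0 < q"
  have "((\<lambda>p::real. 1/p) \<longlongrightarrow> 0) at_top"
    by (intro tendsto_divide_0[OF tendsto_const] filterlim_at_top_imp_at_infinity filterlim_ident)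
  then have "((\<lambda>p. q powr (1/p)) \<longlongrightarrow> q powr 0) at_top"
    using q by (intro tendsto_intros) auto
  then show ?thesis
    using q by simp
qed

lemma lip_const_d_p_less_of_lip_const_d_s_less_1:
  assumes "0 < q0" "q0 < 1" "lip_const (d_s q0) f < 1" "0 < q" "q < 1"
  shows "\<exists>p. 1 \<le> p \<and> lip_const (d_p p q) f < ereal ((1 - q) powr (1 / p))"
proof -
  obtain L where L: "0 \<le> L" "L < 1" "lipschitz_wrt (d_s q0) L f"
    using assms(3) unfolding one_ereal_def lip_const_less_iff by blast
  have "eventually (\<lambda>p. q0 < q powr (1/p) \<and> L < (1 - q) powr (1/p) \<and> 1 \<le> p) at_top"
    using order_tendstoD(1)[OF tendsto_powr_inverse_at_top[of q] assms(2)]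
      order_tendstoD(1)[OF tendsto_powr_inverse_at_top[of "1 - q"] L(2)]
      eventually_ge_at_top[of "1::real"] assms
    by (intro eventually_conj) auto
  then obtain p where p: "q0 < q powr (1/p)" "L < (1 - q) powr (1/p)" "1 \<le> p"
    using eventually_happens by force
  have "q0 powr p \<le> (q powr (1/p)) powr p"
    using p assms by (intro powr_mono2) auto
  then have q0p: "q0 powr p \<le> q"
    using p assms by (simp add: powr_powr)
  have "lipschitz_wrt (d_p p q) (L * 1) f"
    by (intro lipschitz_wrt_compare[OF L(3,1)])
      (use d_s_le_d_p[OF _ _ assms(4,5) _ assms(1) q0p] p(3) in simp)
  then show ?thesis
    using p L by (auto simp: lip_const_less_iff)
qed

lemma lip_const_d_s_less_1_of_lip_const_d_p_less:
  assumes "0 < q" "q < 1" "1 \<le> p" "lip_const (d_p p q) f < ereal ((1 - q) powr (1 / p))"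
  shows "\<exists>q'. 0 < q' \<and> q' < 1 \<and> lip_const (d_s q') f < 1"
proof -
  obtain L where L: "0 \<le> L" "L < (1 - q) powr (1 / p)" "lipschitz_wrt (d_p p q) L f"
    using assms(4) unfolding lip_const_less_iff by blast
  define c where "c t = (1 - q / t powr p) powr (-1/p)" for t :: real
  have "L * c 1 < (1 - q) powr (1/p) * c 1"
    using L assms unfolding c_def by (intro mult_strict_right_mono) auto
  also have "\<dots> = 1"
    using assms by (simp add: c_def powr_add[symmetric])
  finally have "L * c 1 < 1" .
  moreover have "((\<lambda>t. L * c t) \<longlongrightarrow> L * c 1) (at_left 1)"
    using assms unfolding c_def by (intro tendsto_intros) auto
  moreover have "((\<lambda>t::real. t powr p) \<longlongrightarrow> 1 powr p) (at_left 1)"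
    by (intro tendsto_intros) auto
  ultimately have "eventually (\<lambda>t. q < t powr p \<and> L * c t < 1 \<and> 0 < t \<and> t < 1) (at_left 1)"
    using order_tendstoD(1)[of "\<lambda>t. t powr p" 1 "at_left 1" q] order_tendstoD(2) assms
      eventually_at_left_real[of 0 1]
    by (intro eventually_conj) (auto elim: eventually_mono)
  then obtain t where t: "q < t powr p" "L * c t < 1" "0 < t" "t < 1"
    using eventually_happens by force
  have "lipschitz_wrt (d_s t) (L * c t) f"
  proof (rule lipschitz_wrt_compare[OF L(3,1)])
    fix x y :: "nat \<Rightarrow> 'a" assume "x \<in> linf" "y \<in> linf"
    then show "d_p p q x y \<le> c t * d_s t x y"
      unfolding c_def by (rule d_p_le_d_s) (use assms t in auto)
  qed
  moreover have "0 \<le> L * c t"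
    using L unfolding c_def by auto
  ultimately have "lip_const (d_s t) f < ereal 1"
    using t unfolding lip_const_less_iff by blast
  then show ?thesis
    using t by (auto simp: one_ereal_def)
qed

theorem mainTheorem12:
  fixes f :: "(nat \<Rightarrow> 'a::metric_space) \<Rightarrow> 'a"
  shows "((\<exists>q. 0 < q \<and> q < 1 \<and> lip_const (d_s q) f < 1)
          \<longleftrightarrow> (\<exists>q p. 0 < q \<and> q < 1 \<and> 1 \<le> p \<and>
                 lip_const (d_p p q) f < ereal ((1 - q) powr (1 / p))))
       \<and> ((\<exists>q p. 0 < q \<and> q < 1 \<and> 1 \<le> p \<and>
                 lip_const (d_p p q) f < ereal ((1 - q) powr (1 / p)))
          \<longleftrightarrow> (\<forall>q. 0 < q \<and> q < 1 \<longrightarrow> (\<exists>p. 1 \<le> p \<and>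
                 lip_const (d_p p q) f < ereal ((1 - q) powr (1 / p)))))"
    (is "(?i \<longleftrightarrow> ?ii) \<and> (?ii \<longleftrightarrow> ?iii)")
proof -
  have "?i \<Longrightarrow> ?iii"
    using lip_const_d_p_less_of_lip_const_d_s_less_1 by blast
  moreover have "?iii \<Longrightarrow> ?ii"
  proof -
    assume ?iii
    obtain p where "1 \<le> p" "lip_const (d_p p (1/2)) f < ereal ((1 - 1/2) powr (1 / p))"
      using spec[OF \<open>?iii\<close>, of "1/2"] by auto
    then show ?ii
      by (intro exI[of _ "1/2 :: real"] exI[of _ p]) auto
  qed
  moreover have "?ii \<Longrightarrow> ?i"
    using lip_const_d_s_less_1_of_lip_const_d_p_less by blast
  ultimately show ?thesis
    by blast
qed

end
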